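(* For all $n,r\in\mathbb{N}$, the statistics $\operatorname{veh}$ and $\operatorname{des}$ have the same distribution over $\mathfrak{S}_n^r$, i.e. $\sum_{\pi\in\mathfrak{S}_n^r}t^{\operatorname{veh}(\pi)}=\sum_{\pi\in\mathfrak{S}_n^r}t^{\operatorname{des}(\pi)}$.
   Context: The stack-sorting operator $S$ on words with distinct positive integer letters: $S$ of the empty word is empty; if $w=LmR$ with $m$ the greatest letter, $S(w)=S(L)S(R)m$. $\mathfrak{S}_n^r=\{\pi\in\mathfrak{S}_n:S^r(\pi)=12\cdots n\}$. For $\pi=a_1\cdots a_n$, $\operatorname{des}(\pi)=|\{i\in[n-1]:a_i>a_{i+1}\}|$. The unordered decreasing tree $T(w;\infty)$ ($\infty$ larger than all letters): a single vertex $\infty$ if $w$ is empty; otherwise $w=m_1w_1\cdots m_kw_k$ with $m_i$ the left-to-right maxima, and $T(w;\infty)$ has root $\infty$ with subtrees $T(w_i;m_i)$ (same construction with root labeled $m_i$). $\operatorname{veh}(\pi)$ is the number of non-root vertices of even height (root at height $0$) in $T(\pi;\infty)$. *)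

theory Defs
  imports "HOL-Combinatorics.Multiset_Permutations" "HOL-Computational_Algebra.Polynomial"
begin

text \<open>Words are lists of natural numbers (distinct positive letters).
Stack-sorting: S [] = []; if w = L m R with m the greatest letter, S w = S L S R m.\<close>

function stack_sort :: "nat list \<Rightarrow> nat list" where
  "stack_sort w =
     (if w = [] then []
      else (let m = Max (set w);
                L = takeWhile (\<lambda>x. x \<noteq> m) w;
                R = tl (dropWhile (\<lambda>x. x \<noteq> m) w)
            in stack_sort L @ stack_sort R @ [m]))"
  by pat_completeness auto
termination
proof (relation "measure length")
  fix w :: "nat list" and m L
  assume "w \<noteq> []" "m = Max (set w)" "L = takeWhile (\<lambda>x. x \<noteq> m) w"
  then have "m \<in> set w" by simp
  then have "length (takeWhile (\<lambda>x. x \<noteq> m) w) < length w"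
    by (induction w) auto
  then show "(L, w) \<in> measure length"
    using \<open>L = _\<close> by simp
next
  fix w :: "nat list" and m R
  assume "w \<noteq> []" "m = Max (set w)" "R = tl (dropWhile (\<lambda>x. x \<noteq> m) w)"
  then show "(R, w) \<in> measure length"
    using length_dropWhile_le[of "\<lambda>x. x \<noteq> Max (set w)" w] by (cases w) auto
qed simp

definition sortable_perms :: "nat \<Rightarrow> nat \<Rightarrow> nat list set" where
  "sortable_perms n r =
     {\<pi> \<in> permutations_of_set {1..n}. (stack_sort ^^ r) \<pi> = [1..<n+1]}"

definition des :: "nat list \<Rightarrow> nat" where
  "des \<pi> = card {i. 1 \<le> i \<and> i < length \<pi> \<and> \<pi> ! (i - 1) > \<pi> ! i}"

text \<open>evh w b counts the vertices of the forest formed by the subtrees of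
T(w; root) (i.e. all non-root vertices) that lie at even height, where b says
whether the children of the root lie at even height.  Writing
w = m_1 w_1 ... m_k w_k with m_i the left-to-right maxima, the first block is
m_1 w_1 with w_1 = takeWhile (< m_1) of the rest, and the remaining blocks form
the rest of the word (their left-to-right maxima are the m_2,...,m_k).\<close>
function evh :: "nat list \<Rightarrow> bool \<Rightarrow> nat" where
  "evh [] b = 0"
| "evh (m # rest) b =
     (if b then 1 else 0)
     + evh (takeWhile (\<lambda>x. x < m) rest) (\<not> b)
     + evh (dropWhile (\<lambda>x. x < m) rest) b"
  by pat_completeness auto
termination
  by (relation "measure (\<lambda>(w, b). length w)")
     (auto simp: le_less_trans[OF length_takeWhile_le] le_less_trans[OF length_dropWhile_le])

text \<open>Root of T(\<pi>;\<infinity>) has height 0, so its children have odd height 1.\<close>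
definition veh :: "nat list \<Rightarrow> nat" where
  "veh \<pi> = evh \<pi> False"

end

(*
  The (r+1)-sortable permutations are the S-preimages of the r-sortable ones, so it suffices
  to show that veh and des are equidistributed on every fiber of S.  A distinct word with
  S-image sigma' m is exactly L m R with m its largest letter, S L a prefix of sigma' and S R
  the complementary suffix.  In T(L m R) the subtrees of T(L) keep their heights, m becomes one
  more child of the root and T(R) hangs below m, one level deeper; meanwhile
  des (L m R) = des L + des R + [R nonempty].  Hence the generating polynomials of a fiber
  satisfy product recursions over the length k of L, and induction on the length of sigma shows
  that the veh polynomial equals the des polynomial, while the polynomial with the parity of
  heights flipped is t times it (for nonempty sigma).  The factor 1 sits at k = 0 in the one recursion and at
  k = |sigma'| in the other; this is harmless because the two extreme terms coincide.
*)

theory Submission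
  imports Defs
begin

lemma des_Nil [simp]: "des [] = 0"
  by (simp add: des_def)

lemma des_singleton [simp]: "des [a] = 0"
  by (simp add: des_def)

lemma des_Cons_Cons: "des (a # b # w) = (if b < a then 1 else 0) + des (b # w)"
proof -
  let ?D = "\<lambda>xs. {i. 1 \<le> i \<and> i < length xs \<and> xs ! (i - 1) > xs ! i}"
  have D: "?D (a # b # w) = {i. i = 1 \<and> b < a} \<union> Suc ` ?D (b # w)"
    by (auto simp: image_iff nth_Cons' gr0_conv_Suc)
       (metis Suc_pred le_simps(3) not_gr0 not_less_eq_eq)
  have "finite (?D (b # w))"
    by (rule finite_subset[of _ "{..<length (b # w)}"]) auto
  then have "card (?D (a # b # w)) = card {i::nat. i = 1 \<and> b < a} + card (?D (b # w))"
    unfolding D by (subst card_Un_disjoint) (auto simp: card_image)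
  moreover have "card {i::nat. i = 1 \<and> b < a} = (if b < a then 1 else 0)"
    by simp
  ultimately show ?thesis
    by (simp only: des_def)
qed

lemma des_sorted: "sorted_wrt (<) xs \<Longrightarrow> des xs = 0"
  by (induction xs rule: induct_list012) (auto simp: des_Cons_Cons)

lemma des_append_max:
  assumes "\<forall>x\<in>set L. x < m" "\<forall>x\<in>set R. x < m"
  shows "des (L @ m # R) = des L + des R + (if R = [] then 0 else 1)"
proof -
  have "des (m # R) = (if R = [] then 0 else 1) + des R"
    using assms(2) by (cases R) (auto simp: des_Cons_Cons)
  with assms(1) show ?thesis
    by (induction L rule: induct_list012) (auto simp: des_Cons_Cons)
qed

lemma evh_append_max:
  assumes "\<forall>x\<in>set L. x < m" "\<forall>x\<in>set R. x < m"
  shows "evh (L @ m # R) b = (if b then 1 else 0) + evh L b + evh R (\<not> b)"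
  using assms(1)
proof (induction "length L" arbitrary: L rule: less_induct)
  case less
  show ?case
  proof (cases L)
    case Nil
    have "takeWhile (\<lambda>x. x < m) R = R" "dropWhile (\<lambda>x. x < m) R = []"
      using assms(2) by simp_all
    with Nil show ?thesis
      by (simp del: takeWhile_eq_all_conv dropWhile_eq_Nil_conv)
  next
    case (Cons a L')
    let ?L'' = "dropWhile (\<lambda>x. x < a) L'"
    have "a < m"
      using less.prems Cons by simp
    then have "takeWhile (\<lambda>x. x < a) (L' @ m # R) = takeWhile (\<lambda>x. x < a) L'"
      and "dropWhile (\<lambda>x. x < a) (L' @ m # R) = ?L'' @ m # R"
      by (induction L') auto
    moreover have "evh (?L'' @ m # R) b = (if b then 1 else 0) + evh ?L'' b + evh R (\<not> b)"
      using Cons less.prems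
      by (intro less.hyps) (auto simp: le_less_trans[OF length_dropWhile_le] dest: set_dropWhileD)
    ultimately show ?thesis
      using Cons by simp
  qed
qed

lemma evh_sorted: "sorted_wrt (<) xs \<Longrightarrow> evh xs False = 0"
proof (induction xs)
  case (Cons a xs)
  then have "takeWhile (\<lambda>x. x < a) xs = []" "dropWhile (\<lambda>x. x < a) xs = xs"
    by (cases xs; simp)+
  with Cons show ?case
    by simp
qed simp

declare stack_sort.simps [simp del]

lemma stack_sort_Nil [simp]: "stack_sort [] = []"
  by (simp add: stack_sort.simps)

lemma stack_sort_append_max:
  assumes "\<forall>x\<in>set L. x < m" "\<forall>x\<in>set R. x < m"
  shows "stack_sort (L @ m # R) = stack_sort L @ stack_sort R @ [m]"
proof -
  have "Max (set (L @ m # R)) = m"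
    using assms by (intro Max_eqI) auto
  moreover have "takeWhile (\<lambda>x. x \<noteq> m) (L @ m # R) = L"
    and "dropWhile (\<lambda>x. x \<noteq> m) (L @ m # R) = m # R"
    using assms(1) by (induction L) auto
  ultimately show ?thesis
    by (simp add: stack_sort.simps[of "L @ m # R"] Let_def)
qed

lemma mset_stack_sort [simp]: "mset (stack_sort w) = mset w"
proof (induction w rule: stack_sort.induct)
  case (1 w)
  show ?case
  proof (cases "w = []")
    case False
    define m where "m = Max (set w)"
    define L where "L = takeWhile (\<lambda>x. x \<noteq> m) w"
    define R where "R = tl (dropWhile (\<lambda>x. x \<noteq> m) w)"
    have "m \<in> set w"
      using False by (simp add: m_def)
    then have w: "w = L @ m # R"
      unfolding L_def R_def by (induction w) auto
    have "stack_sort w = stack_sort L @ stack_sort R @ [m]"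
      using False by (simp add: stack_sort.simps[of w] Let_def m_def L_def R_def)
    then have "mset (stack_sort w) = mset (stack_sort L) + mset (stack_sort R) + {#m#}"
      by simp
    also have "\<dots> = mset L + mset R + {#m#}"
      using "1.IH" False by (simp add: m_def L_def R_def)
    also have "\<dots> = mset w"
      using w by simp
    finally show ?thesis .
  qed simp
qed

lemma length_stack_sort [simp]: "length (stack_sort w) = length w"
  by (metis mset_stack_sort size_mset)

lemma set_stack_sort [simp]: "set (stack_sort w) = set w"
  by (metis mset_stack_sort set_mset_mset)

lemma distinct_stack_sort [simp]: "distinct (stack_sort w) \<longleftrightarrow> distinct w"
  by (metis mset_stack_sort mset_eq_imp_distinct_iff)

lemma distinct_split_max:
  fixes \<pi> :: "'a::linorder list"
  assumes "distinct \<pi>" "\<pi> \<noteq> []"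
  obtains L m R where "\<pi> = L @ m # R" "\<forall>x\<in>set L. x < m" "\<forall>x\<in>set R. x < m"
proof -
  define m where "m = Max (set \<pi>)"
  have "m \<in> set \<pi>"
    using assms(2) by (simp add: m_def)
  then obtain L R where \<pi>: "\<pi> = L @ m # R"
    by (meson split_list)
  have "x < m" if "x \<in> set L \<union> set R" for x
  proof -
    have "x \<in> set \<pi>"
      using that \<pi> by auto
    then have "x \<le> m"
      by (simp add: m_def)
    moreover have "x \<noteq> m"
      using that assms(1) \<pi> by auto
    ultimately show ?thesis
      by simp
  qed
  with \<pi> show thesis
    using that by blast
qed

definition stack_sort_fiber :: "nat list \<Rightarrow> nat list set" where
  "stack_sort_fiber \<sigma> = {\<pi>. distinct \<pi> \<and> stack_sort \<pi> = \<sigma>}"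

lemma finite_stack_sort_fiber: "finite (stack_sort_fiber \<sigma>)"
proof (rule finite_subset)
  show "stack_sort_fiber \<sigma> \<subseteq> {xs. set xs \<subseteq> set \<sigma> \<and> length xs = length \<sigma>}"
    unfolding stack_sort_fiber_def by auto
  show "finite {xs. set xs \<subseteq> set \<sigma> \<and> length xs = length \<sigma>}"
    by (rule finite_lists_length_eq) simp
qed

lemma stack_sort_fiber_Nil: "stack_sort_fiber [] = {[]}"
  unfolding stack_sort_fiber_def by (auto dest: arg_cong[of _ _ length])

lemma mem_stack_sort_fiberD:
  assumes "\<pi> \<in> stack_sort_fiber \<sigma>"
  shows "set \<pi> = set \<sigma>" "length \<pi> = length \<sigma>"
  using assms unfolding stack_sort_fiber_def by auto

lemma mem_stack_sort_fiber_snocE: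
  assumes "\<pi> \<in> stack_sort_fiber \<sigma>" "\<sigma> \<noteq> []"
  obtains \<sigma>' m where "\<sigma> = \<sigma>' @ [m]" "distinct (\<sigma>' @ [m])" "\<forall>x\<in>set \<sigma>'. x < m"
proof -
  have \<pi>: "distinct \<pi>" "stack_sort \<pi> = \<sigma>"
    using assms(1) unfolding stack_sort_fiber_def by auto
  moreover from this assms(2) have "\<pi> \<noteq> []"
    by auto
  ultimately obtain L m R where "\<pi> = L @ m # R" and L: "\<forall>x\<in>set L. x < m" and R: "\<forall>x\<in>set R. x < m"
    using distinct_split_max by blast
  with \<pi> have "\<sigma> = (stack_sort L @ stack_sort R) @ [m]" "distinct \<sigma>"
    by (auto simp: stack_sort_append_max)
  moreover have "\<forall>x\<in>set (stack_sort L @ stack_sort R). x < m"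
    using L R by auto
  ultimately show thesis
    using that by simp
qed

lemma stack_sort_fiber_take_drop:
  assumes "\<forall>x\<in>set \<sigma>'. x < m"
    and "L \<in> stack_sort_fiber (take k \<sigma>')" "R \<in> stack_sort_fiber (drop k \<sigma>')"
  shows "\<forall>x\<in>set L. x < m" "\<forall>x\<in>set R. x < m"
    and "L = [] \<longleftrightarrow> k = 0 \<or> \<sigma>' = []" "R = [] \<longleftrightarrow> length \<sigma>' \<le> k"
  using assms(1) mem_stack_sort_fiberD[OF assms(2)] mem_stack_sort_fiberD[OF assms(3)]
  by (auto dest: in_set_takeD in_set_dropD)

definition stack_sort_fiber_splits :: "nat list \<Rightarrow> (nat \<times> nat list \<times> nat list) set" where
  "stack_sort_fiber_splits \<sigma>' =
    (SIGMA k:{..length \<sigma>'}. stack_sort_fiber (take k \<sigma>') \<times> stack_sort_fiber (drop k \<sigma>'))"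

lemma inj_on_stack_sort_fiber_splits:
  assumes "\<forall>x\<in>set \<sigma>'. x < m"
  shows "inj_on (\<lambda>(k, L, R). L @ m # R) (stack_sort_fiber_splits \<sigma>')"
proof (rule inj_onI)
  fix x y
  assume "x \<in> stack_sort_fiber_splits \<sigma>'" "y \<in> stack_sort_fiber_splits \<sigma>'"
    and eq: "(\<lambda>(k, L, R). L @ m # R) x = (\<lambda>(k, L, R). L @ m # R) y"
  moreover obtain k L R k' L' R' where "x = (k, L, R)" "y = (k', L', R')"
    by (cases x, cases y) auto
  ultimately have k: "k \<le> length \<sigma>'" "k' \<le> length \<sigma>'"
    and L: "L \<in> stack_sort_fiber (take k \<sigma>')" "L' \<in> stack_sort_fiber (take k' \<sigma>')"
    and R: "R \<in> stack_sort_fiber (drop k \<sigma>')"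
    and LR: "L @ m # R = L' @ m # R'"
    by (auto simp: stack_sort_fiber_splits_def)
  have "m \<notin> set L" "m \<notin> set R"
    using stack_sort_fiber_take_drop(1,2)[OF assms L(1) R] by blast+
  with LR have "L = L'" "R = R'"
    by (simp_all add: append_Cons_eq_iff)
  moreover have "length L = k" "length L' = k'"
    using k L by (simp_all add: mem_stack_sort_fiberD(2))
  ultimately show "x = y"
    using \<open>x = _\<close> \<open>y = _\<close> by simp
qed

lemma stack_sort_fiber_splits_image_subset:
  assumes "distinct (\<sigma>' @ [m])" "\<forall>x\<in>set \<sigma>'. x < m"
  shows "(\<lambda>(k, L, R). L @ m # R) ` stack_sort_fiber_splits \<sigma>' \<subseteq> stack_sort_fiber (\<sigma>' @ [m])"
proof clarify
  fix k L R
  assume "(k, L, R) \<in> stack_sort_fiber_splits \<sigma>'"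
  then have L: "L \<in> stack_sort_fiber (take k \<sigma>')" and R: "R \<in> stack_sort_fiber (drop k \<sigma>')"
    by (auto simp: stack_sort_fiber_splits_def)
  note less_m = stack_sort_fiber_take_drop(1,2)[OF assms(2) L R]
  have "set L \<inter> set R = {}"
    using assms(1) mem_stack_sort_fiberD(1)[OF L] mem_stack_sort_fiberD(1)[OF R]
    by (simp add: set_take_disj_set_drop_if_distinct)
  then have "distinct (L @ m # R)"
    using L R less_m unfolding stack_sort_fiber_def by auto
  moreover have "stack_sort (L @ m # R) = \<sigma>' @ [m]"
    using L R less_m unfolding stack_sort_fiber_def by (simp add: stack_sort_append_max)
  ultimately show "L @ m # R \<in> stack_sort_fiber (\<sigma>' @ [m])"
    unfolding stack_sort_fiber_def by simp
qed

lemma stack_sort_fiber_snoc_subset_image: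
  "stack_sort_fiber (\<sigma>' @ [m]) \<subseteq> (\<lambda>(k, L, R). L @ m # R) ` stack_sort_fiber_splits \<sigma>'"
proof
  fix \<pi>
  assume "\<pi> \<in> stack_sort_fiber (\<sigma>' @ [m])"
  then have "distinct \<pi>" and \<pi>_sorts: "stack_sort \<pi> = \<sigma>' @ [m]"
    unfolding stack_sort_fiber_def by auto
  moreover have "\<pi> \<noteq> []"
    using \<pi>_sorts by auto
  ultimately obtain L m' R where \<pi>: "\<pi> = L @ m' # R"
    and "\<forall>x\<in>set L. x < m'" "\<forall>x\<in>set R. x < m'"
    using distinct_split_max by blast
  then have "stack_sort L @ stack_sort R @ [m'] = \<sigma>' @ [m]"
    using \<pi>_sorts by (simp add: stack_sort_append_max)
  then have "m' = m" and "stack_sort L @ stack_sort R = \<sigma>'"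
    by simp_all
  then have "(length L, L, R) \<in> stack_sort_fiber_splits \<sigma>'"
    using \<open>distinct \<pi>\<close> \<pi> unfolding stack_sort_fiber_splits_def stack_sort_fiber_def by auto
  with \<pi> \<open>m' = m\<close> show "\<pi> \<in> (\<lambda>(k, L, R). L @ m # R) ` stack_sort_fiber_splits \<sigma>'"
    by force
qed

lemma sum_stack_sort_fiber_snoc:
  assumes "distinct (\<sigma>' @ [m])" "\<forall>x\<in>set \<sigma>'. x < m"
  shows "(\<Sum>\<pi>\<in>stack_sort_fiber (\<sigma>' @ [m]). f \<pi>) =
    (\<Sum>k\<le>length \<sigma>'. \<Sum>L\<in>stack_sort_fiber (take k \<sigma>'). \<Sum>R\<in>stack_sort_fiber (drop k \<sigma>'). f (L @ m # R))"
proof -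
  have "stack_sort_fiber (\<sigma>' @ [m]) = (\<lambda>(k, L, R). L @ m # R) ` stack_sort_fiber_splits \<sigma>'"
    using stack_sort_fiber_splits_image_subset[OF assms] stack_sort_fiber_snoc_subset_image
    by (rule subset_antisym[rotated])
  then have "(\<Sum>\<pi>\<in>stack_sort_fiber (\<sigma>' @ [m]). f \<pi>) =
      (\<Sum>(k, L, R)\<in>stack_sort_fiber_splits \<sigma>'. f (L @ m # R))"
    by (rule sum.reindex_cong[OF inj_on_stack_sort_fiber_splits[OF assms(2)]]) auto
  also have "\<dots> = (\<Sum>k\<le>length \<sigma>'. \<Sum>(L, R)\<in>stack_sort_fiber (take k \<sigma>') \<times> stack_sort_fiber (drop k \<sigma>').
      f (L @ m # R))"
    unfolding stack_sort_fiber_splits_def by (subst sum.Sigma) (auto simp: finite_stack_sort_fiber)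
  finally show ?thesis
    by (simp add: sum.cartesian_product)
qed

definition fiber_des_gf :: "'a::comm_ring_1 \<Rightarrow> nat list \<Rightarrow> 'a" where
  "fiber_des_gf t \<sigma> = (\<Sum>\<pi>\<in>stack_sort_fiber \<sigma>. t ^ des \<pi>)"

definition fiber_evh_gf :: "'a::comm_ring_1 \<Rightarrow> bool \<Rightarrow> nat list \<Rightarrow> 'a" where
  "fiber_evh_gf t b \<sigma> = (\<Sum>\<pi>\<in>stack_sort_fiber \<sigma>. t ^ evh \<pi> b)"

lemma fiber_des_gf_Nil [simp]: "fiber_des_gf t [] = 1"
  by (simp add: fiber_des_gf_def stack_sort_fiber_Nil)

lemma fiber_evh_gf_Nil [simp]: "fiber_evh_gf t b [] = 1"
  by (simp add: fiber_evh_gf_def stack_sort_fiber_Nil)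

lemma sum_sum_mult_distrib:
  fixes c :: "'a::comm_semiring_0"
  shows "(\<Sum>x\<in>A. \<Sum>y\<in>B. c * (f x * g y)) = c * (sum f A * sum g B)"
  by (subst sum_product) (simp add: sum_distrib_left)

lemma fiber_des_gf_snoc:
  assumes "distinct (\<sigma>' @ [m])" "\<forall>x\<in>set \<sigma>'. x < m"
  shows "fiber_des_gf t (\<sigma>' @ [m]) = (\<Sum>k\<le>length \<sigma>'. (if k = length \<sigma>' then 1 else t) *
    (fiber_des_gf t (take k \<sigma>') * fiber_des_gf t (drop k \<sigma>')))"
proof -
  have "t ^ des (L @ m # R) = (if k = length \<sigma>' then 1 else t) * (t ^ des L * t ^ des R)"
    if "k \<le> length \<sigma>'" "L \<in> stack_sort_fiber (take k \<sigma>')" "R \<in> stack_sort_fiber (drop k \<sigma>')"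
    for k L R
    using that stack_sort_fiber_take_drop[OF assms(2) that(2,3)]
    by (simp add: des_append_max power_add)
  then show ?thesis
    unfolding fiber_des_gf_def sum_stack_sort_fiber_snoc[OF assms] sum_sum_mult_distrib[symmetric]
    by (intro sum.cong refl) auto
qed

lemma fiber_evh_gf_snoc:
  assumes "distinct (\<sigma>' @ [m])" "\<forall>x\<in>set \<sigma>'. x < m"
  shows "fiber_evh_gf t b (\<sigma>' @ [m]) = (\<Sum>k\<le>length \<sigma>'. (if b then t else 1) *
    (fiber_evh_gf t b (take k \<sigma>') * fiber_evh_gf t (\<not> b) (drop k \<sigma>')))"
proof -
  have "t ^ evh (L @ m # R) b = (if b then t else 1) * (t ^ evh L b * t ^ evh R (\<not> b))"
    if "L \<in> stack_sort_fiber (take k \<sigma>')" "R \<in> stack_sort_fiber (drop k \<sigma>')" for k L R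
    using stack_sort_fiber_take_drop[OF assms(2) that]
    by (simp add: evh_append_max power_add)
  then show ?thesis
    unfolding fiber_evh_gf_def sum_stack_sort_fiber_snoc[OF assms] sum_sum_mult_distrib[symmetric]
    by (intro sum.cong refl) auto
qed

lemma sum_atMost_weight_one_at:
  fixes c :: "nat \<Rightarrow> 'a::comm_ring_1"
  assumes "j \<le> n"
  shows "(\<Sum>k\<le>n. (if k = j then 1 else t) * c k) = t * sum c {..n} + (1 - t) * c j"
proof -
  have "(\<Sum>k\<le>n. (if k = j then 1 else t) * c k) = (\<Sum>k\<le>n. t * c k + (if k = j then (1 - t) * c k else 0))"
    by (intro sum.cong) (auto simp: algebra_simps)
  also have "\<dots> = t * sum c {..n} + (1 - t) * c j"
    using assms by (simp add: sum.distrib sum_distrib_left)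
  finally show ?thesis .
qed

lemma fiber_evh_gf_eq_des_gf:
  fixes t :: "'a::comm_ring_1"
  shows "fiber_evh_gf t False \<sigma> = fiber_des_gf t \<sigma>
    \<and> fiber_evh_gf t True \<sigma> = (if \<sigma> = [] then 1 else t) * fiber_des_gf t \<sigma>"
proof (induction "length \<sigma>" arbitrary: \<sigma> rule: less_induct)
  case less
  consider "\<sigma> = []" | "stack_sort_fiber \<sigma> = {}"
    | \<sigma>' m where "\<sigma> = \<sigma>' @ [m]" "distinct (\<sigma>' @ [m])" "\<forall>x\<in>set \<sigma>'. x < m"
    using mem_stack_sort_fiber_snocE by blast
  then show ?case
  proof cases
    case 2
    then show ?thesis
      by (simp add: fiber_des_gf_def fiber_evh_gf_def)
  next
    case 3
    let ?N = "length \<sigma>'" and ?D = "fiber_des_gf t"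
    let ?c = "\<lambda>k. ?D (take k \<sigma>') * ?D (drop k \<sigma>')"
    have IH: "fiber_evh_gf t False \<tau> = ?D \<tau>" "fiber_evh_gf t True \<tau> = (if \<tau> = [] then 1 else t) * ?D \<tau>"
      if "length \<tau> \<le> ?N" for \<tau>
      using that 3(1) less.hyps[of \<tau>] by auto
    have "fiber_evh_gf t False \<sigma> = (\<Sum>k\<le>?N. (if k = ?N then 1 else t) * ?c k)"
      unfolding 3(1) fiber_evh_gf_snoc[OF 3(2,3)] using IH
      by (intro sum.cong) (auto simp: algebra_simps)
    also have "\<dots> = ?D \<sigma>"
      unfolding 3(1) fiber_des_gf_snoc[OF 3(2,3)] ..
    finally have even_root: "fiber_evh_gf t False \<sigma> = ?D \<sigma>" .
    have "fiber_evh_gf t True \<sigma> = t * (\<Sum>k\<le>?N. (if k = 0 then 1 else t) * ?c k)"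
      unfolding 3(1) fiber_evh_gf_snoc[OF 3(2,3)] using IH
      by (auto simp: sum_distrib_left algebra_simps intro!: sum.cong)
    also have "\<dots> = t * (\<Sum>k\<le>?N. (if k = ?N then 1 else t) * ?c k)"
      \<comment> \<open>the weight 1 may move from \<open>k = 0\<close> to \<open>k = ?N\<close> since \<open>?c 0 = ?c ?N\<close>\<close>
      by (simp add: sum_atMost_weight_one_at)
    also have "\<dots> = t * ?D \<sigma>"
      unfolding 3(1) fiber_des_gf_snoc[OF 3(2,3)] ..
    finally show ?thesis
      using even_root 3(1) by simp
  qed simp
qed

lemma finite_sortable_perms: "finite (sortable_perms n r)"
  by (rule finite_subset[of _ "permutations_of_set {1..n}"]) (auto simp: sortable_perms_def)

lemma sortable_perms_0: "sortable_perms n 0 = {[1..<n+1]}"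
  unfolding sortable_perms_def permutations_of_set_def by auto

lemma sortable_perms_Suc_iff:
  "\<pi> \<in> sortable_perms n (Suc r) \<longleftrightarrow> stack_sort \<pi> \<in> sortable_perms n r \<and> distinct \<pi>"
  unfolding sortable_perms_def permutations_of_set_def by (auto simp: funpow_swap1)

lemma sum_sortable_perms_Suc:
  "(\<Sum>\<pi>\<in>sortable_perms n (Suc r). f \<pi>) = (\<Sum>\<sigma>\<in>sortable_perms n r. \<Sum>\<pi>\<in>stack_sort_fiber \<sigma>. f \<pi>)"
proof -
  have "(\<Sum>\<pi>\<in>sortable_perms n (Suc r). f \<pi>) =
      (\<Sum>\<sigma>\<in>sortable_perms n r. \<Sum>\<pi>\<in>{\<pi> \<in> sortable_perms n (Suc r). stack_sort \<pi> = \<sigma>}. f \<pi>)"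
    by (rule sum.group[symmetric]) (auto simp: finite_sortable_perms sortable_perms_Suc_iff)
  moreover have "{\<pi> \<in> sortable_perms n (Suc r). stack_sort \<pi> = \<sigma>} = stack_sort_fiber \<sigma>"
    if "\<sigma> \<in> sortable_perms n r" for \<sigma>
    using that by (auto simp: sortable_perms_Suc_iff stack_sort_fiber_def)
  ultimately show ?thesis
    by simp
qed

theorem corollary7p3:
  fixes n r :: nat
  shows "(\<Sum>\<pi>\<in>sortable_perms n r. [:0, 1:] ^ veh \<pi>)
       = (\<Sum>\<pi>\<in>sortable_perms n r. ([:0, 1:] :: int poly) ^ des \<pi>)"
proof (cases r)
  case 0
  have "sorted_wrt (<) [1..<n+1]"
    by (rule sorted_wrt_upt)
  then have "veh [1..<n+1] = 0" "des [1..<n+1] = 0"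
    unfolding veh_def by (rule evh_sorted, rule des_sorted)
  then show ?thesis
    by (simp add: 0 sortable_perms_0)
next
  case (Suc r')
  have "(\<Sum>\<pi>\<in>stack_sort_fiber \<sigma>. t ^ veh \<pi>) = (\<Sum>\<pi>\<in>stack_sort_fiber \<sigma>. t ^ des \<pi>)"
    for \<sigma> and t :: "int poly"
    using fiber_evh_gf_eq_des_gf[of t \<sigma>] unfolding fiber_evh_gf_def fiber_des_gf_def veh_def by simp
  then show ?thesis
    by (simp add: Suc sum_sortable_perms_Suc)
qed

end
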